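(* Let $\mu_n>0$ satisfy $\mu_n\to0$ and $n^{1/2}\mu_n\to\mathfrak m$ with $0\le\mathfrak m\le\infty$, and let $t\in\mathbb R$. Then every consistent estimator $\hat F_n(t)$ of $F_{A,n,\theta}(t)$ satisfies $$\lim_{n\to\infty}\sup_{|\theta|<c/n^{1/2}}P_{n,\theta}\big(|\hat F_n(t)-F_{A,n,\theta}(t)|>\varepsilon\big)=1$$ for each $\varepsilon<(\Phi(t+\mathfrak m)-\Phi(t-\mathfrak m))/2$ and each $c>|t|$ (with $\Phi(\pm\infty)$ interpreted as $1$, $0$). In particular, no uniformly consistent estimator of $F_{A,n,\theta}(t)$ exists.
   Context: Gaussian location model: for each sample size $n$, $y_1,\dots,y_n$ are i.i.d. $N(\theta,1)$ with $\theta\in\mathbb R$ unknown; $\bar y$ is their mean. $P_{n,\theta}$ denotes the probability governing a sample of size $n$ when $\theta$ is the true parameter. Given a nonrandom tuning parameter $\mu_n>0$, the adaptive LASSO estimator is $\hat\theta_A=0$ if $|\bar y|\le\mu_n$ and $\hat\theta_A=\bar y-\mu_n^2/\bar y$ if $|\bar y|>\mu_n$. $F_{A,n,\theta}$ denotes the cdf of $n^{1/2}(\hat\theta_A-\theta)$ under $P_{n,\theta}$. An estimator $\hat F_n(t)$ is any (possibly randomized) measurable function of the data $y_1,\dots,y_n$ (and of an independent randomization); it is consistent if for every $\theta\in\mathbb R$ and every $\eta>0$, $P_{n,\theta}(|\hat F_n(t)-F_{A,n,\theta}(t)|>\eta)\to0$. $\Phi$ is the standard normal cdf. *)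

theory Defs
  imports "HOL-Probability.Probability"
begin

definition Phi :: "real \<Rightarrow> real" where
  "Phi x = measure (density lborel std_normal_density) {..x}"

fun Phi_ext :: "ereal \<Rightarrow> real" where
  "Phi_ext (ereal x) = Phi x"
| "Phi_ext PInfty = 1"
| "Phi_ext MInfty = 0"

definition ybar :: "nat \<Rightarrow> (nat \<Rightarrow> real) \<Rightarrow> real" where
  "ybar n y = (\<Sum>i<n. y i) / real n"

definition sample :: "nat \<Rightarrow> real \<Rightarrow> (nat \<Rightarrow> real) measure" where
  "sample n \<theta> = PiM {..<n} (\<lambda>_. density lborel (normal_density \<theta> 1))"

definition thetaA :: "(nat \<Rightarrow> real) \<Rightarrow> nat \<Rightarrow> (nat \<Rightarrow> real) \<Rightarrow> real" where
  "thetaA mu n y = (if \<bar>ybar n y\<bar> \<le> mu n then 0 else ybar n y - (mu n)\<^sup>2 / ybar n y)"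

definition FA :: "(nat \<Rightarrow> real) \<Rightarrow> nat \<Rightarrow> real \<Rightarrow> real \<Rightarrow> real" where
  "FA mu n \<theta> t = measure (sample n \<theta>) {y \<in> space (sample n \<theta>). sqrt (real n) * (thetaA mu n y - \<theta>) \<le> t}"

text \<open>P_{n,theta}(|Fhat_n(t) - F_{A,n,theta}(t)| > eps), for a (randomized) estimator
  Fhat n y r, where r is an independent randomization with law R n.\<close>
definition err_prob :: "(nat \<Rightarrow> real) \<Rightarrow> (nat \<Rightarrow> 'r measure) \<Rightarrow> (nat \<Rightarrow> (nat \<Rightarrow> real) \<Rightarrow> 'r \<Rightarrow> real)
    \<Rightarrow> real \<Rightarrow> nat \<Rightarrow> real \<Rightarrow> real \<Rightarrow> real" where
  "err_prob mu R Fhat t n \<theta> \<epsilon> =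
     measure (sample n \<theta> \<Otimes>\<^sub>M R n)
       {(y, r) \<in> space (sample n \<theta> \<Otimes>\<^sub>M R n). \<bar>Fhat n y r - FA mu n \<theta> t\<bar> > \<epsilon>}"

end

theory Submission
  imports Defs
begin

(* Fix t, c > |t| and \<epsilon> below the gap (Phi(t+m) - Phi(t-m))/2.  For small \<delta> > 0 and
   M < \<surd>n \<mu>_n consider the two local parameters \<theta>1 = (-t-\<delta>)/\<surd>n and \<theta>2 = (-t+\<delta>)/\<surd>n,
   which lie in the window |\<theta>| < c/\<surd>n.  The event {\<surd>n(\<theta>_A - \<theta>) \<le> t} contains
   {ybar \<le> \<mu>_n} at \<theta>2 and is contained in {ybar \<le> -\<mu>_n} at \<theta>1; as ybar ~ N(\<theta>, 1/n),
   F_A(t) grows by at least Phi(t+M-\<delta>) - Phi(t-M+\<delta>) > 2\<epsilon> from \<theta>1 to \<theta>2.  Hence at one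
   of them the target F_{A,n,\<theta>}(t) is more than \<epsilon> + \<eta> away from F_{A,n,0}(t), and the
   estimator can only be \<epsilon>-close to it where it is not \<eta>-close to F_{A,n,0}(t).  The latter
   event has vanishing probability under \<theta> = 0 by consistency, and the local alternatives are
   contiguous to \<theta> = 0 through the explicit bound P_\<theta>(A) \<le> K P_0(A) + exp(n\<theta>^2)/K, which
   follows from the second moment of the likelihood ratio. *)

subsection \<open>The Gaussian sample and its likelihood ratio\<close>

lemma product_sigma_finite_normal:
  "product_sigma_finite (\<lambda>_::nat. density lborel (normal_density \<theta> 1))"
  unfolding product_sigma_finite_def
  by (simp add: prob_space_normal_density prob_space_imp_sigma_finite)

lemma product_sigma_finite_lborel: "product_sigma_finite (\<lambda>_::nat. lborel::real measure)"
  unfolding product_sigma_finite_def by (simp add: lborel.sigma_finite_measure_axioms)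

lemma indicator_PiE_eq_prod:
  assumes "finite I" and "x \<in> extensional I"
  shows "(indicator (Pi\<^sub>E I A) x :: 'b::comm_semiring_1) = (\<Prod>i\<in>I. indicator (A i) (x i))"
proof (cases "x \<in> Pi\<^sub>E I A")
  case True
  then show ?thesis by (auto simp: indicator_def PiE_iff)
next
  case False
  then obtain j where "j \<in> I" "x j \<notin> A j" using assms(2) by (auto simp: PiE_iff)
  then have "(\<Prod>i\<in>I. indicator (A i) (x i) :: 'b) = 0"
    using assms(1) by (intro prod_zero) (auto intro!: bexI[of _ j])
  then show ?thesis using False by simp
qed

lemma sample_density:
  "sample n \<theta> = density (PiM {..<n} (\<lambda>_. lborel)) (\<lambda>x. \<Prod>i<n. normal_density \<theta> 1 (x i))"
proof -
  interpret P: product_sigma_finite "\<lambda>_::nat. density lborel (normal_density \<theta> 1)"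
    by (rule product_sigma_finite_normal)
  interpret L: product_sigma_finite "\<lambda>_::nat. lborel::real measure"
    by (rule product_sigma_finite_lborel)
  define D where "D = density (PiM {..<n} (\<lambda>_. lborel)) (\<lambda>x. \<Prod>i<n. normal_density \<theta> 1 (x i))"
  have "D = PiM {..<n} (\<lambda>_. density lborel (normal_density \<theta> 1))"
  proof (rule P.PiM_eqI)
    show "sets D = sets (PiM {..<n} (\<lambda>_. density lborel (normal_density \<theta> 1)))"
      unfolding D_def sets_density by (rule sets_PiM_cong) auto
  next
    fix A assume "\<And>i. i \<in> {..<n} \<Longrightarrow> A i \<in> sets (density lborel (normal_density \<theta> 1))"
    then have A: "\<And>i. i \<in> {..<n} \<Longrightarrow> A i \<in> sets borel" by simp
    have "emeasure D (Pi\<^sub>E {..<n} A)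
       = (\<integral>\<^sup>+ x. ennreal (\<Prod>i<n. normal_density \<theta> 1 (x i)) * indicator (Pi\<^sub>E {..<n} A) x
            \<partial>PiM {..<n} (\<lambda>_. lborel))"
      unfolding D_def using A by (subst emeasure_density) (auto intro!: sets_PiM_I_finite)
    also have "\<dots> = (\<integral>\<^sup>+ x. (\<Prod>i<n. ennreal (normal_density \<theta> 1 (x i)) * indicator (A i) (x i))
                     \<partial>PiM {..<n} (\<lambda>_. lborel))"
      by (intro nn_integral_cong)
         (simp add: space_PiM PiE_iff indicator_PiE_eq_prod prod_ennreal prod.distrib)
    also have "\<dots> = (\<Prod>i<n. \<integral>\<^sup>+ y. ennreal (normal_density \<theta> 1 y) * indicator (A i) y \<partial>lborel)"
      using A by (intro L.product_nn_integral_prod) auto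
    also have "\<dots> = (\<Prod>i<n. emeasure (density lborel (normal_density \<theta> 1)) (A i))"
      using A by (intro prod.cong refl, subst emeasure_density) auto
    finally show "emeasure D (Pi\<^sub>E {..<n} A)
       = (\<Prod>i\<in>{..<n}. emeasure (density lborel (normal_density \<theta> 1)) (A i))" by simp
  qed simp
  then show ?thesis unfolding sample_def D_def by simp
qed

lemma prob_space_sample: "prob_space (sample n \<theta>)"
  unfolding sample_def by (intro prob_space_PiM) (simp add: prob_space_normal_density)

lemma sets_sample: "sets (sample n \<theta>) = sets (PiM {..<n} (\<lambda>_. lborel))"
  unfolding sample_def by (rule sets_PiM_cong) auto

lemma space_sample: "space (sample n \<theta>) = space (PiM {..<n} (\<lambda>_. lborel))"
  using sets_sample sets_eq_imp_space_eq by blast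

lemma sets_sample_pair: "sets (sample n \<theta> \<Otimes>\<^sub>M Q) = sets (PiM {..<n} (\<lambda>_. lborel) \<Otimes>\<^sub>M Q)"
  by (rule sets_pair_measure_cong) (auto simp: sets_sample)

lemma space_sample_pair: "space (sample n \<theta> \<Otimes>\<^sub>M Q) = space (PiM {..<n} (\<lambda>_. lborel) \<Otimes>\<^sub>M Q)"
  by (rule sets_eq_imp_space_eq[OF sets_sample_pair])

lemma prob_space_sample_pair: "prob_space Q \<Longrightarrow> prob_space (sample n \<theta> \<Otimes>\<^sub>M Q)"
  by (intro prob_space_pair prob_space_sample)

definition likelihood_ratio :: "nat \<Rightarrow> real \<Rightarrow> (nat \<Rightarrow> real) \<Rightarrow> real" where
  "likelihood_ratio n \<theta> y = (\<Prod>i<n. exp (\<theta> * y i - \<theta>\<^sup>2 / 2))"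

lemma likelihood_ratio_measurable[measurable]:
  "likelihood_ratio n \<theta> \<in> borel_measurable (PiM {..<n} (\<lambda>_. lborel))"
  unfolding likelihood_ratio_def by measurable

lemma normal_density_shift:
  "normal_density \<theta> 1 x = std_normal_density x * exp (\<theta> * x - \<theta>\<^sup>2 / 2)"
  unfolding normal_density_def
  by (simp add: exp_add[symmetric] power2_eq_square algebra_simps) (simp add: field_simps)

lemma normal_density_shift_sq:
  "std_normal_density x * (exp (\<theta> * x - \<theta>\<^sup>2 / 2))\<^sup>2 = exp (\<theta>\<^sup>2) * normal_density (2 * \<theta>) 1 x"
  unfolding normal_density_def
  by (simp add: exp_add[symmetric] power2_eq_square algebra_simps exp_double[symmetric])
     (simp add: field_simps)

lemma nn_integral_sample_change:
  assumes h: "h \<in> borel_measurable (PiM {..<n} (\<lambda>_. lborel))"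
  shows "(\<integral>\<^sup>+ y. h y \<partial>sample n \<theta>) = (\<integral>\<^sup>+ y. ennreal (likelihood_ratio n \<theta> y) * h y \<partial>sample n 0)"
proof -
  have "(\<integral>\<^sup>+ y. h y \<partial>sample n \<theta>) =
     (\<integral>\<^sup>+ y. ennreal (\<Prod>i<n. normal_density \<theta> 1 (y i)) * h y \<partial>PiM {..<n} (\<lambda>_. lborel))"
    unfolding sample_density using h by (subst nn_integral_density) auto
  also have "\<dots> = (\<integral>\<^sup>+ y. ennreal (\<Prod>i<n. normal_density 0 1 (y i)) *
                      (ennreal (likelihood_ratio n \<theta> y) * h y) \<partial>PiM {..<n} (\<lambda>_. lborel))"
    by (intro nn_integral_cong)
       (simp add: likelihood_ratio_def normal_density_shift[of \<theta>] prod.distrib ennreal_mult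
          prod_nonneg mult.assoc)
  also have "\<dots> = (\<integral>\<^sup>+ y. ennreal (likelihood_ratio n \<theta> y) * h y \<partial>sample n 0)"
    unfolding sample_density using h by (subst nn_integral_density) auto
  finally show ?thesis .
qed

text \<open>The second moment of the likelihood ratio is exp(n \<theta> squared); it stays bounded on
  neighbourhoods of size O(1/\<surd>n).\<close>
lemma likelihood_ratio_second_moment:
  "(\<integral>\<^sup>+ y. ennreal ((likelihood_ratio n \<theta> y)\<^sup>2) \<partial>sample n 0) = ennreal (exp (real n * \<theta>\<^sup>2))"
proof -
  interpret L: product_sigma_finite "\<lambda>_::nat. lborel::real measure"
    by (rule product_sigma_finite_lborel)
  have "(\<integral>\<^sup>+ y. ennreal ((likelihood_ratio n \<theta> y)\<^sup>2) \<partial>sample n 0) =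
     (\<integral>\<^sup>+ y. ennreal (\<Prod>i<n. normal_density 0 1 (y i)) * ennreal ((likelihood_ratio n \<theta> y)\<^sup>2)
        \<partial>PiM {..<n} (\<lambda>_. lborel))"
    unfolding sample_density by (subst nn_integral_density) auto
  also have "\<dots> = (\<integral>\<^sup>+ y. (\<Prod>i<n. ennreal (exp (\<theta>\<^sup>2) * normal_density (2*\<theta>) 1 (y i)))
                     \<partial>PiM {..<n} (\<lambda>_. lborel))"
    by (intro nn_integral_cong)
       (simp add: likelihood_ratio_def prod_power_distrib normal_density_shift_sq[symmetric]
          prod.distrib ennreal_mult'[symmetric] prod_nonneg prod_ennreal)
  also have "\<dots> = (\<Prod>i<n. \<integral>\<^sup>+ x. ennreal (exp (\<theta>\<^sup>2) * normal_density (2*\<theta>) 1 x) \<partial>lborel)"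
    by (intro L.product_nn_integral_prod) auto
  also have "\<dots> = (\<Prod>i<n. ennreal (exp (\<theta>\<^sup>2)))"
    by (simp add: ennreal_mult nn_integral_cmult nn_integral_eq_integral)
  also have "\<dots> = ennreal (exp (real n * \<theta>\<^sup>2))"
    by (simp add: ennreal_power exp_of_nat_mult)
  finally show ?thesis .
qed

text \<open>Split the likelihood ratio L at K and
  use L \<le> L squared / K where L > K.\<close>
lemma contiguity_bound:
  assumes Q: "prob_space Q" and A: "A \<in> sets (PiM {..<n} (\<lambda>_. lborel) \<Otimes>\<^sub>M Q)" and K: "K > 0"
  shows "measure (sample n \<theta> \<Otimes>\<^sub>M Q) A
           \<le> K * measure (sample n 0 \<Otimes>\<^sub>M Q) A + exp (real n * \<theta>\<^sup>2) / K"
proof -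
  interpret Q: prob_space Q by (rule Q)
  interpret P\<theta>: prob_space "sample n \<theta> \<Otimes>\<^sub>M Q" by (rule prob_space_sample_pair[OF Q])
  interpret P0: prob_space "sample n 0 \<Otimes>\<^sub>M Q" by (rule prob_space_sample_pair[OF Q])
  define L where "L = likelihood_ratio n \<theta>"
  define g where "g y = emeasure Q (Pair y -` A)" for y
  have A': "A \<in> sets (sample n s \<Otimes>\<^sub>M Q)" for s using A sets_sample_pair by blast
  have g_meas: "g \<in> borel_measurable (PiM {..<n} (\<lambda>_. lborel))"
    unfolding g_def using Q.measurable_emeasure_Pair[OF A] .
  have pointwise: "ennreal (L y) * g y \<le> ennreal K * g y + ennreal (1/K) * ennreal ((L y)\<^sup>2)" for y
  proof (cases "L y \<le> K")
    case True
    then have "ennreal (L y) * g y \<le> ennreal K * g y"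
      by (intro mult_right_mono ennreal_leI) auto
    then show ?thesis by (rule order_trans) simp
  next
    case False
    have "ennreal (L y) * g y \<le> ennreal (L y)"
      using mult_left_mono[OF Q.emeasure_le_1, of "ennreal (L y)"] unfolding g_def by simp
    also have "\<dots> \<le> ennreal (1/K) * ennreal ((L y)\<^sup>2)"
      using False K by (simp add: ennreal_mult[symmetric] power2_eq_square field_simps)
    finally show ?thesis by (rule order_trans) simp
  qed
  have "emeasure (sample n \<theta> \<Otimes>\<^sub>M Q) A = (\<integral>\<^sup>+ y. g y \<partial>sample n \<theta>)"
    unfolding g_def by (rule Q.emeasure_pair_measure_alt[OF A'])
  also have "\<dots> = (\<integral>\<^sup>+ y. ennreal (L y) * g y \<partial>sample n 0)"
    unfolding L_def by (rule nn_integral_sample_change[OF g_meas])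
  also have "\<dots> \<le> (\<integral>\<^sup>+ y. ennreal K * g y + ennreal (1/K) * ennreal ((L y)\<^sup>2) \<partial>sample n 0)"
    by (intro nn_integral_mono pointwise)
  also have "\<dots> = ennreal K * (\<integral>\<^sup>+ y. g y \<partial>sample n 0)
                  + ennreal (1/K) * (\<integral>\<^sup>+ y. ennreal ((L y)\<^sup>2) \<partial>sample n 0)"
    using g_meas unfolding L_def
    by (subst nn_integral_add) (auto simp: nn_integral_cmult measurable_cong_sets[OF sets_sample refl])
  also have "\<dots> = ennreal (K * measure (sample n 0 \<Otimes>\<^sub>M Q) A + exp (real n * \<theta>\<^sup>2) / K)"
    unfolding g_def L_def likelihood_ratio_second_moment Q.emeasure_pair_measure_alt[OF A', symmetric]
    using K by (simp add: P0.emeasure_eq_measure ennreal_mult[symmetric] ennreal_plus[symmetric]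
                  del: ennreal_plus)
  finally show ?thesis
    using K by (simp add: P\<theta>.emeasure_eq_measure ennreal_plus[symmetric] ennreal_le_iff
                  del: ennreal_plus)
qed

subsection \<open>The sample mean and the cdf of the adaptive LASSO\<close>

lemma sample_component:
  assumes i: "i < n"
  shows "distributed (sample n \<theta>) lborel (\<lambda>y. y i) (normal_density \<theta> 1)"
proof -
  have "distr (sample n \<theta>) lborel (\<lambda>y. y i)
      = distr (sample n \<theta>) (density lborel (normal_density \<theta> 1)) (\<lambda>y. y i)"
    by (rule distr_cong) auto
  also have "\<dots> = density lborel (normal_density \<theta> 1)"
    unfolding sample_def using i
    by (intro distr_PiM_component) (auto simp: prob_space_normal_density)
  moreover have "(\<lambda>y. y i) \<in> PiM {..<n} (\<lambda>_. lborel) \<rightarrow>\<^sub>M lborel"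
    by (rule measurable_component_singleton) (use i in auto)
  ultimately show ?thesis unfolding distributed_def
    by (auto simp: measurable_cong_sets[OF sets_sample refl])
qed

lemma sample_indep:
  assumes "n > 0"
  shows "prob_space.indep_vars (sample n \<theta>) (\<lambda>_. borel) (\<lambda>i y. y i) {..<n}"
proof -
  interpret prob_space "sample n \<theta>" by (rule prob_space_sample)
  have rv: "random_variable borel (\<lambda>y. y i)" if "i \<in> {..<n}" for i
    using that by (simp add: measurable_cong_sets[OF sets_sample refl])
  have marginal: "distr (sample n \<theta>) borel (\<lambda>y. y i) = density lborel (normal_density \<theta> 1)"
    if "i < n" for i
  proof -
    have "distr (sample n \<theta>) borel (\<lambda>y. y i) = distr (sample n \<theta>) lborel (\<lambda>y. y i)"
      by (rule distr_cong) auto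
    then show ?thesis using sample_component[OF that] unfolding distributed_def by simp
  qed
  have "distr (sample n \<theta>) (PiM {..<n} (\<lambda>_. borel)) (\<lambda>x. \<lambda>i\<in>{..<n}. x i)
      = distr (sample n \<theta>) (PiM {..<n} (\<lambda>_. borel)) (\<lambda>x. x)"
    by (rule distr_cong) (auto simp: space_sample space_PiM PiE_def extensional_def fun_eq_iff)
  also have "\<dots> = sample n \<theta>"
    by (rule distr_id2) (unfold sets_sample, rule sets_PiM_cong, auto)
  also have "\<dots> = PiM {..<n} (\<lambda>i. distr (sample n \<theta>) borel (\<lambda>y. y i))"
    unfolding sample_def using marginal by (intro PiM_cong) (auto simp: sample_def)
  finally show ?thesis using assms
    by (subst indep_vars_iff_distr_eq_PiM'[OF _ rv]) auto
qed

lemma ybar_cdf: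
  assumes n: "n > 0"
  shows "measure (sample n \<theta>) {y \<in> space (sample n \<theta>). ybar n y \<le> x} = Phi (sqrt (real n) * (x - \<theta>))"
proof -
  interpret prob_space "sample n \<theta>" by (rule prob_space_sample)
  define Y where "Y y = ((\<Sum>i<n. y i) - real n * \<theta>) / sqrt (real n)" for y
  have "distributed (sample n \<theta>) lborel (\<lambda>y. \<Sum>i\<in>{..<n}. y i)
      (normal_density (\<Sum>i\<in>{..<n}. \<theta>) (sqrt (\<Sum>i\<in>{..<n}. 1\<^sup>2)))"
    using n by (intro sum_indep_normal sample_indep sample_component) auto
  then have Y: "distributed (sample n \<theta>) lborel Y std_normal_density"
    using n unfolding Y_def[abs_def] by (subst (asm) normal_standard_normal_convert) auto
  have "ybar n y \<le> x \<longleftrightarrow> Y y \<le> sqrt (real n) * (x - \<theta>)" for y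
  proof -
    have sn: "sqrt (real n) > 0" using n by simp
    have "Y y \<le> sqrt (real n) * (x - \<theta>)
        \<longleftrightarrow> (\<Sum>i<n. y i) - real n * \<theta> \<le> sqrt (real n) * sqrt (real n) * (x - \<theta>)"
      unfolding Y_def using sn by (simp add: pos_divide_le_eq mult.commute mult.left_commute)
    also have "\<dots> \<longleftrightarrow> ybar n y \<le> x"
      unfolding ybar_def using n by (simp add: pos_divide_le_eq mult.commute algebra_simps)
    finally show ?thesis by simp
  qed
  then have "{y \<in> space (sample n \<theta>). ybar n y \<le> x}
      = Y -` {..sqrt (real n) * (x - \<theta>)} \<inter> space (sample n \<theta>)" by auto
  also have "measure (sample n \<theta>) \<dots> = measure (distr (sample n \<theta>) lborel Y) {..sqrt (real n) * (x - \<theta>)}"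
    using Y unfolding distributed_def by (subst measure_distr) auto
  also have "\<dots> = Phi (sqrt (real n) * (x - \<theta>))"
    using Y unfolding distributed_def Phi_def by simp
  finally show ?thesis .
qed

lemma shrink_pos:
  fixes b m :: real
  assumes "m < b" "0 < m"
  shows "b - m\<^sup>2 / b > 0"
proof -
  have "m\<^sup>2 < b\<^sup>2" using assms by (intro power_strict_mono) auto
  then show ?thesis using assms by (simp add: field_simps power2_eq_square)
qed

lemma shrink_nonpos:
  fixes b m :: real
  assumes "b < -m" "0 < m"
  shows "b - m\<^sup>2 / b \<le> 0"
proof -
  have "m\<^sup>2 \<le> (-b)\<^sup>2" using assms by (intro power_mono) auto
  then show ?thesis using assms by (simp add: field_simps power2_eq_square)
qed

lemma FA_set_measurable:
  "{y \<in> space (sample n \<theta>). sqrt (real n) * (thetaA mu n y - \<theta>) \<le> t} \<in> sets (sample n \<theta>)"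
  unfolding sets_sample space_sample thetaA_def ybar_def by measurable

lemma ybar_set_measurable: "{y \<in> space (sample n \<theta>). ybar n y \<le> x} \<in> sets (sample n \<theta>)"
  unfolding sets_sample space_sample ybar_def by measurable

text \<open>If t + \<surd>n \<theta> \<ge> 0, every sample with ybar \<le> \<mu>_n (where the estimator is \<le> 0) is counted
  by F_A, so F_{A,n,\<theta>}(t) \<ge> Phi(\<surd>n(\<mu>_n - \<theta>)).\<close>
lemma FA_lower:
  assumes n: "n > 0" and mu: "mu n > 0" and t: "t + sqrt (real n) * \<theta> \<ge> 0"
  shows "Phi (sqrt (real n) * (mu n - \<theta>)) \<le> FA mu n \<theta> t"
proof -
  interpret prob_space "sample n \<theta>" by (rule prob_space_sample)
  have "sqrt (real n) * (thetaA mu n y - \<theta>) \<le> t" if "ybar n y \<le> mu n" for y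
  proof -
    have "thetaA mu n y \<le> 0"
      using that shrink_nonpos[OF _ mu, of "ybar n y"] by (auto simp: thetaA_def)
    then have "sqrt (real n) * thetaA mu n y \<le> 0" by (simp add: mult_nonneg_nonpos)
    then show ?thesis using t by (simp add: algebra_simps)
  qed
  then have "{y \<in> space (sample n \<theta>). ybar n y \<le> mu n}
      \<subseteq> {y \<in> space (sample n \<theta>). sqrt (real n) * (thetaA mu n y - \<theta>) \<le> t}" by auto
  then show ?thesis
    unfolding FA_def ybar_cdf[OF n, symmetric] by (intro finite_measure_mono FA_set_measurable)
qed

text \<open>If t + \<surd>n \<theta> < 0, only samples with ybar \<le> -\<mu>_n (where the estimator is negative) are
  counted, so F_{A,n,\<theta>}(t) \<le> Phi(\<surd>n(-\<mu>_n - \<theta>)).\<close>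
lemma FA_upper:
  assumes n: "n > 0" and mu: "mu n > 0" and t: "t + sqrt (real n) * \<theta> < 0"
  shows "FA mu n \<theta> t \<le> Phi (sqrt (real n) * (- mu n - \<theta>))"
proof -
  interpret prob_space "sample n \<theta>" by (rule prob_space_sample)
  have "ybar n y \<le> - mu n" if "sqrt (real n) * (thetaA mu n y - \<theta>) \<le> t" for y
  proof -
    have "sqrt (real n) * thetaA mu n y < 0" using that t by (simp add: algebra_simps)
    then have "thetaA mu n y < 0" using n by (simp add: mult_less_0_iff)
    then show ?thesis using shrink_pos[OF _ mu, of "ybar n y"]
      by (auto simp: thetaA_def abs_le_iff not_le split: if_splits)
  qed
  then have "{y \<in> space (sample n \<theta>). sqrt (real n) * (thetaA mu n y - \<theta>) \<le> t}
      \<subseteq> {y \<in> space (sample n \<theta>). ybar n y \<le> - mu n}" by auto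
  then show ?thesis
    unfolding FA_def ybar_cdf[OF n, symmetric] by (intro finite_measure_mono ybar_set_measurable)
qed

subsection \<open>The standard normal cdf\<close>

lemma Phi_eq_cdf: "Phi = cdf std_normal_distribution"
  by (simp add: fun_eq_iff Phi_def cdf_def)

lemma Phi_mono: "x \<le> y \<Longrightarrow> Phi x \<le> Phi y"
proof -
  interpret real_distribution std_normal_distribution by (rule real_dist_normal_dist)
  show "x \<le> y \<Longrightarrow> Phi x \<le> Phi y" unfolding Phi_eq_cdf by (rule cdf_nondecreasing)
qed

lemma isCont_Phi: "isCont Phi x"
proof -
  interpret real_distribution std_normal_distribution by (rule real_dist_normal_dist)
  have "emeasure std_normal_distribution {x} = 0"
    by (subst emeasure_density) auto
  then have "measure std_normal_distribution {x} = 0" by (simp add: measure_def)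
  then show ?thesis unfolding Phi_eq_cdf using isCont_cdf by blast
qed

lemma Phi_at_top: "(Phi \<longlongrightarrow> 1) at_top"
  unfolding Phi_eq_cdf using real_distribution.cdf_lim_at_top_prob[OF real_dist_normal_dist] .

lemma Phi_at_bot: "(Phi \<longlongrightarrow> 0) at_bot"
proof -
  interpret real_distribution std_normal_distribution by (rule real_dist_normal_dist)
  show ?thesis unfolding Phi_eq_cdf by (rule cdf_lim_at_bot)
qed

subsection \<open>Two local alternatives with well separated targets\<close>

lemma FA_spread:
  assumes n: "n > 0" and mu: "mu n > 0" and M: "M < sqrt (real n) * mu n" and \<delta>: "\<delta> > 0"
  shows "Phi (t + M - \<delta>) - Phi (t - M + \<delta>)
           \<le> FA mu n ((- t + \<delta>) / sqrt (real n)) t - FA mu n ((- t - \<delta>) / sqrt (real n)) t"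
proof -
  define \<theta>2 where "\<theta>2 = (- t + \<delta>) / sqrt (real n)"
  define \<theta>1 where "\<theta>1 = (- t - \<delta>) / sqrt (real n)"
  have "sqrt (real n) > 0" using n by simp
  then have scaled2: "sqrt (real n) * \<theta>2 = - t + \<delta>" and scaled1: "sqrt (real n) * \<theta>1 = - t - \<delta>"
    unfolding \<theta>2_def \<theta>1_def by simp_all
  have "Phi (t + M - \<delta>) \<le> Phi (sqrt (real n) * (mu n - \<theta>2))"
    using M scaled2 by (intro Phi_mono) (simp add: algebra_simps)
  also have "\<dots> \<le> FA mu n \<theta>2 t"
    using scaled2 \<delta> by (intro FA_lower[of n mu]) (simp_all add: n mu)
  finally have upper_point: "Phi (t + M - \<delta>) \<le> FA mu n \<theta>2 t" .
  have "FA mu n \<theta>1 t \<le> Phi (sqrt (real n) * (- mu n - \<theta>1))"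
    using scaled1 \<delta> by (intro FA_upper[of n mu]) (simp_all add: n mu)
  also have "\<dots> \<le> Phi (t - M + \<delta>)"
    using M scaled1 by (intro Phi_mono) (simp add: algebra_simps)
  finally show ?thesis using upper_point unfolding \<theta>2_def \<theta>1_def by linarith
qed

lemma Phi_gap_finite:
  assumes d: "0 < d" and m: "0 < m" and gap: "2 * \<epsilon> < Phi (t + m) - Phi (t - m)"
  shows "\<exists>\<delta> M. 0 < \<delta> \<and> \<delta> < d \<and> M < m \<and> 2 * \<epsilon> < Phi (t + M - \<delta>) - Phi (t - M + \<delta>)"
proof -
  have right: "((\<lambda>s::real. t + m - 2 * s) \<longlongrightarrow> t + m) (at_right 0)"
    and left: "((\<lambda>s::real. t - m + 2 * s) \<longlongrightarrow> t - m) (at_right 0)"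
    by (auto intro!: tendsto_eq_intros)
  have "((\<lambda>s. Phi (t + m - 2 * s) - Phi (t - m + 2 * s)) \<longlongrightarrow> Phi (t + m) - Phi (t - m)) (at_right 0)"
    using isCont_tendsto_compose[OF isCont_Phi right] isCont_tendsto_compose[OF isCont_Phi left]
    by (rule tendsto_diff)
  from order_tendstoD(1)[OF this gap]
  obtain b where b: "b > 0" "\<And>s. 0 < s \<Longrightarrow> s < b \<Longrightarrow> 2 * \<epsilon> < Phi (t + m - 2 * s) - Phi (t - m + 2 * s)"
    unfolding eventually_at_right_field by auto
  define s where "s = min b (min d m) / 2"
  have s: "0 < s" "s < b" "s < d" "s < m" using b d m unfolding s_def by auto
  show ?thesis
    using b(2)[OF s(1,2)] s by (intro exI[of _ s] exI[of _ "m - s"]) (simp add: algebra_simps)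
qed

lemma Phi_gap_infinite:
  assumes d: "0 < d" and gap: "2 * \<epsilon> < 1"
  shows "\<exists>\<delta> M. 0 < \<delta> \<and> \<delta> < d \<and> 2 * \<epsilon> < Phi (t + M - \<delta>) - Phi (t - M + \<delta>)"
proof -
  define \<delta> where "\<delta> = d / 2"
  have "filterlim (\<lambda>M::real. t + M - \<delta>) at_top at_top"
    using filterlim_tendsto_add_at_top[OF tendsto_const[of "t - \<delta>"] filterlim_ident]
    by (simp add: algebra_simps)
  moreover have "filterlim (\<lambda>M::real. t - M + \<delta>) at_bot at_top"
    using filterlim_tendsto_add_at_bot_iff[OF tendsto_const[of "t + \<delta>"], of "\<lambda>M. - M"]
          filterlim_uminus_at_bot_at_top
    by (simp add: algebra_simps)
  ultimately have "((\<lambda>M. Phi (t + M - \<delta>) - Phi (t - M + \<delta>)) \<longlongrightarrow> 1 - 0) at_top"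
    using filterlim_compose[OF Phi_at_top] filterlim_compose[OF Phi_at_bot] by (intro tendsto_diff)
  from order_tendstoD(1)[OF this] gap
  obtain M where "2 * \<epsilon> < Phi (t + M - \<delta>) - Phi (t - M + \<delta>)"
    by (auto simp: eventually_at_top_linorder)
  then show ?thesis using d unfolding \<delta>_def by (intro exI[of _ \<delta>] exI[of _ M]) (auto simp: \<delta>_def)
qed

lemma Phi_ext_infinity [simp]: "Phi_ext \<infinity> = 1" and Phi_ext_minus_infinity [simp]: "Phi_ext (- \<infinity>) = 0"
  unfolding infinity_ereal_def by (simp_all only: uminus_ereal.simps Phi_ext.simps)

text \<open>Choice of the offset \<delta> (keeping both alternatives in the window |\<theta>| < c/\<surd>n) and of a
  finite level M below m with Phi(t+M-\<delta>) - Phi(t-M+\<delta>) > 2\<epsilon>.\<close>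
lemma choose_offset_and_level:
  fixes m :: ereal
  assumes m: "0 < m" and eps: "\<epsilon> < (Phi_ext (ereal t + m) - Phi_ext (ereal t - m)) / 2"
    and c: "\<bar>t\<bar> < c"
  shows "\<exists>\<delta> M. 0 < \<delta> \<and> \<delta> < c - \<bar>t\<bar> \<and> ereal M < m \<and>
                2 * \<epsilon> < Phi (t + M - \<delta>) - Phi (t - M + \<delta>)"
proof (cases m)
  case (real m0)
  have "2 * \<epsilon> < Phi (t + m0) - Phi (t - m0)" using eps real by simp
  moreover have "0 < m0" "0 < c - \<bar>t\<bar>" using m c real by simp_all
  ultimately obtain \<delta> M where "0 < \<delta>" "\<delta> < c - \<bar>t\<bar>" "M < m0"
      "2 * \<epsilon> < Phi (t + M - \<delta>) - Phi (t - M + \<delta>)"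
    using Phi_gap_finite by blast
  then show ?thesis using real by (intro exI[of _ \<delta>] exI[of _ M]) simp
next
  case PInf
  have "ereal t + m = \<infinity>" "ereal t - m = - \<infinity>" using PInf by simp_all
  then have "2 * \<epsilon> < 1" using eps by simp
  moreover have "0 < c - \<bar>t\<bar>" using c by simp
  ultimately obtain \<delta> M where "0 < \<delta>" "\<delta> < c - \<bar>t\<bar>"
      "2 * \<epsilon> < Phi (t + M - \<delta>) - Phi (t - M + \<delta>)"
    using Phi_gap_infinite by blast
  then show ?thesis using PInf by (intro exI[of _ \<delta>] exI[of _ M]) simp
next
  case MInf
  then show ?thesis using m by simp
qed

subsection \<open>From consistency at zero to failure at a local alternative\<close>

lemma error_event_measurable:
  fixes f :: "(nat \<Rightarrow> real) \<Rightarrow> 'q \<Rightarrow> real"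
  assumes f: "(\<lambda>(y, r). f y r) \<in> borel_measurable (PiM {..<n} (\<lambda>_. lborel) \<Otimes>\<^sub>M Q)"
  shows "{(y, r) \<in> space (sample n \<theta> \<Otimes>\<^sub>M Q). a < \<bar>f y r - b\<bar>} \<in> sets (PiM {..<n} (\<lambda>_. lborel) \<Otimes>\<^sub>M Q)"
proof -
  have "(\<lambda>p. \<bar>(case p of (y, r) \<Rightarrow> f y r) - b\<bar>) \<in> borel_measurable (PiM {..<n} (\<lambda>_. lborel) \<Otimes>\<^sub>M Q)"
    using f by measurable
  from measurable_sets[OF this, of "{a<..}"]
  show ?thesis unfolding space_sample_pair by (simp add: vimage_def Int_def case_prod_unfold conj_commute)
qed

lemma error_transfer:
  fixes f :: "(nat \<Rightarrow> real) \<Rightarrow> 'q \<Rightarrow> real"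
  assumes Q: "prob_space Q"
    and f: "(\<lambda>(y, r). f y r) \<in> borel_measurable (PiM {..<n} (\<lambda>_. lborel) \<Otimes>\<^sub>M Q)"
    and K: "K > 0" and far: "\<epsilon> + \<eta> < \<bar>a - b\<bar>"
  shows "1 - (K * measure (sample n 0 \<Otimes>\<^sub>M Q) {(y, r) \<in> space (sample n 0 \<Otimes>\<^sub>M Q). \<eta> < \<bar>f y r - b\<bar>}
              + exp (real n * \<theta>\<^sup>2) / K)
         \<le> measure (sample n \<theta> \<Otimes>\<^sub>M Q) {(y, r) \<in> space (sample n \<theta> \<Otimes>\<^sub>M Q). \<epsilon> < \<bar>f y r - a\<bar>}"
proof -
  interpret P\<theta>: prob_space "sample n \<theta> \<Otimes>\<^sub>M Q" by (rule prob_space_sample_pair[OF Q])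
  define A where "A = {(y, r) \<in> space (sample n 0 \<Otimes>\<^sub>M Q). \<eta> < \<bar>f y r - b\<bar>}"
  define E where "E = {(y, r) \<in> space (sample n \<theta> \<Otimes>\<^sub>M Q). \<epsilon> < \<bar>f y r - a\<bar>}"
  have A: "A \<in> sets (PiM {..<n} (\<lambda>_. lborel) \<Otimes>\<^sub>M Q)"
    unfolding A_def by (rule error_event_measurable[OF f])
  have E: "E \<in> sets (sample n \<theta> \<Otimes>\<^sub>M Q)"
    unfolding E_def sets_sample_pair by (rule error_event_measurable[OF f])
  have "space (sample n \<theta> \<Otimes>\<^sub>M Q) - A \<subseteq> E"
    using far unfolding A_def E_def space_sample_pair by auto
  then have "1 - measure (sample n \<theta> \<Otimes>\<^sub>M Q) A \<le> measure (sample n \<theta> \<Otimes>\<^sub>M Q) E"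
    using A E by (subst P\<theta>.prob_compl[symmetric]) (auto simp: sets_sample_pair intro!: P\<theta>.finite_measure_mono)
  moreover have "measure (sample n \<theta> \<Otimes>\<^sub>M Q) A \<le> K * measure (sample n 0 \<Otimes>\<^sub>M Q) A + exp (real n * \<theta>\<^sup>2) / K"
    by (rule contiguity_bound[OF Q A K])
  ultimately show ?thesis unfolding A_def E_def by linarith
qed

lemma err_prob_le_1:
  fixes R :: "nat \<Rightarrow> 'r measure"
  assumes "prob_space (R n)"
  shows "err_prob mu R Fhat t n \<theta> \<epsilon> \<le> 1"
  unfolding err_prob_def by (rule prob_space.prob_le_1[OF prob_space_sample_pair[OF assms]])

lemma err_prob_negative:
  fixes R :: "nat \<Rightarrow> 'r measure"
  assumes "prob_space (R n)" and "\<epsilon> < 0"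
  shows "err_prob mu R Fhat t n \<theta> \<epsilon> = 1"
proof -
  interpret prob_space "sample n \<theta> \<Otimes>\<^sub>M R n" by (rule prob_space_sample_pair[OF assms(1)])
  have "{(y, r) \<in> space (sample n \<theta> \<Otimes>\<^sub>M R n). \<epsilon> < \<bar>Fhat n y r - FA mu n \<theta> t\<bar>}
      = space (sample n \<theta> \<Otimes>\<^sub>M R n)"
    using assms(2) by (auto simp: space_pair_measure)
  then show ?thesis unfolding err_prob_def by (simp add: prob_space)
qed

lemma one_of_two_far:
  fixes a b z d :: real
  assumes "2 * d < b - a"
  shows "d < \<bar>a - z\<bar> \<or> d < \<bar>b - z\<bar>"
  using assms by arith

text \<open>The key estimate for fixed n: the supremum of the error probability over the window
  |\<theta>| < c/\<surd>n is at least 1 - (K p_n + C/K), where p_n is the error probability at \<theta> = 0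
  with tolerance \<eta> and C = exp((|t| + \<delta>) squared) bounds the likelihood ratio moments of both
  local alternatives.\<close>
lemma sup_err_prob_lower_bound:
  assumes R: "prob_space (R n)"
    and meas: "(\<lambda>(y, r). Fhat n y r) \<in> borel_measurable (PiM {..<n} (\<lambda>_. lborel) \<Otimes>\<^sub>M R n)"
    and n: "n > 0" and mu: "mu n > 0" and M: "M < sqrt (real n) * mu n"
    and \<delta>: "0 < \<delta>" "\<delta> < c - \<bar>t\<bar>"
    and gap: "2 * (\<epsilon> + \<eta>) < Phi (t + M - \<delta>) - Phi (t - M + \<delta>)" and K: "K > 0"
  shows "1 - (K * err_prob mu R Fhat t n 0 \<eta> + exp ((\<bar>t\<bar> + \<delta>)\<^sup>2) / K)
           \<le> (SUP \<theta>\<in>{\<theta>. \<bar>\<theta>\<bar> < c / sqrt (real n)}. err_prob mu R Fhat t n \<theta> \<epsilon>)"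
proof -
  have sn: "sqrt (real n) > 0" using n by simp
  define alternatives where
    "alternatives = {(- t - \<delta>) / sqrt (real n), (- t + \<delta>) / sqrt (real n)}"
  have in_window: "\<bar>\<theta>\<bar> < c / sqrt (real n)"
    and moment: "exp (real n * \<theta>\<^sup>2) \<le> exp ((\<bar>t\<bar> + \<delta>)\<^sup>2)" if "\<theta> \<in> alternatives" for \<theta>
  proof -
    obtain s where \<theta>: "\<theta> = s / sqrt (real n)" and "s \<in> {- t - \<delta>, - t + \<delta>}"
      using \<open>\<theta> \<in> alternatives\<close> unfolding alternatives_def by blast
    then have s: "\<bar>s\<bar> \<le> \<bar>t\<bar> + \<delta>" using \<delta> by auto
    show "\<bar>\<theta>\<bar> < c / sqrt (real n)"
      using s \<delta> sn by (simp add: \<theta> abs_div divide_strict_right_mono)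
    have "real n * \<theta>\<^sup>2 = s\<^sup>2" using n by (simp add: \<theta> power_divide)
    also have "\<dots> \<le> (\<bar>t\<bar> + \<delta>)\<^sup>2" using s \<delta> by (subst power2_le_iff_abs_le) auto
    finally show "exp (real n * \<theta>\<^sup>2) \<le> exp ((\<bar>t\<bar> + \<delta>)\<^sup>2)" by simp
  qed
  have "Phi (t + M - \<delta>) - Phi (t - M + \<delta>)
          \<le> FA mu n ((- t + \<delta>) / sqrt (real n)) t - FA mu n ((- t - \<delta>) / sqrt (real n)) t"
    using n mu M \<delta>(1) by (rule FA_spread)
  with gap have "\<epsilon> + \<eta> < \<bar>FA mu n ((- t - \<delta>) / sqrt (real n)) t - FA mu n 0 t\<bar>
        \<or> \<epsilon> + \<eta> < \<bar>FA mu n ((- t + \<delta>) / sqrt (real n)) t - FA mu n 0 t\<bar>"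
    by (intro one_of_two_far) linarith
  then obtain \<theta> where alt: "\<theta> \<in> alternatives" and far: "\<epsilon> + \<eta> < \<bar>FA mu n \<theta> t - FA mu n 0 t\<bar>"
    unfolding alternatives_def by blast
  have "1 - (K * err_prob mu R Fhat t n 0 \<eta> + exp ((\<bar>t\<bar> + \<delta>)\<^sup>2) / K)
      \<le> 1 - (K * err_prob mu R Fhat t n 0 \<eta> + exp (real n * \<theta>\<^sup>2) / K)"
    using moment[OF alt] K by (simp add: divide_right_mono)
  also have "\<dots> \<le> err_prob mu R Fhat t n \<theta> \<epsilon>"
    unfolding err_prob_def by (rule error_transfer[OF R meas K far])
  also have "\<dots> \<le> (SUP \<theta>\<in>{\<theta>. \<bar>\<theta>\<bar> < c / sqrt (real n)}. err_prob mu R Fhat t n \<theta> \<epsilon>)"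
  proof -
    have "err_prob mu R Fhat t n \<theta>' \<epsilon> \<le> 1" for \<theta>' using R by (rule err_prob_le_1)
    then show ?thesis using in_window[OF alt] by (intro cSUP_upper bdd_aboveI2[where M=1]) auto
  qed
  finally show ?thesis .
qed

text \<open>Squeeze: if s_n \<le> 1, p_n \<rightarrow> 0 and eventually s_n \<ge> 1 - (K p_n + C/K) for all K > 0,
  then s_n \<rightarrow> 1 (take K = 4C/e).\<close>
lemma tendsto_one_by_lower_bounds:
  fixes s p :: "nat \<Rightarrow> real"
  assumes le_1: "eventually (\<lambda>n. s n \<le> 1) sequentially" and p: "p \<longlonglongrightarrow> 0" and C: "C > 0"
    and lower: "eventually (\<lambda>n. \<forall>K>0. 1 - (K * p n + C / K) \<le> s n) sequentially"
  shows "s \<longlonglongrightarrow> 1"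
proof (rule tendstoI)
  fix e :: real assume e: "e > 0"
  define K where "K = 4 * C / e"
  have K: "K > 0" and CK: "C / K = e / 4" unfolding K_def using C e by simp_all
  have "eventually (\<lambda>n. p n < e / (4 * K)) sequentially"
    using order_tendstoD(2)[OF p] e K by simp
  then show "eventually (\<lambda>n. dist (s n) 1 < e) sequentially"
    using le_1 lower
  proof eventually_elim
    case (elim n)
    have "K * p n < e / 4" using elim(1) K by (simp add: field_simps)
    then have "1 - e / 2 < s n" using elim(3) K CK by force
    then show ?case using elim(2) e by (simp add: dist_real_def abs_if)
  qed
qed

theorem theorem5:
  fixes mu :: "nat \<Rightarrow> real" and m :: ereal and t :: real
    and R :: "nat \<Rightarrow> 'r measure" and Fhat :: "nat \<Rightarrow> (nat \<Rightarrow> real) \<Rightarrow> 'r \<Rightarrow> real"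
  assumes mu_pos: "\<And>n. mu n > 0"
    and mu_lim: "mu \<longlonglongrightarrow> 0"
    and m_lim: "(\<lambda>n. ereal (sqrt (real n) * mu n)) \<longlonglongrightarrow> m"
    and m_nonneg: "0 \<le> m"
    and R_prob: "\<And>n. prob_space (R n)"
    and Fhat_meas: "\<And>n. (\<lambda>(y, r). Fhat n y r)
          \<in> borel_measurable (PiM {..<n} (\<lambda>_. lborel) \<Otimes>\<^sub>M R n)"
    and consistent: "\<And>\<theta> \<eta>. \<eta> > 0 \<Longrightarrow> (\<lambda>n. err_prob mu R Fhat t n \<theta> \<eta>) \<longlonglongrightarrow> 0"
  shows "\<forall>\<epsilon> c. \<epsilon> < (Phi_ext (ereal t + m) - Phi_ext (ereal t - m)) / 2 \<and> c > \<bar>t\<bar> \<longrightarrow>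
           (\<lambda>n. SUP \<theta>\<in>{\<theta>. \<bar>\<theta>\<bar> < c / sqrt (real n)}. err_prob mu R Fhat t n \<theta> \<epsilon>) \<longlonglongrightarrow> 1"
proof (intro allI impI, elim conjE)
  fix \<epsilon> c :: real
  assume eps: "\<epsilon> < (Phi_ext (ereal t + m) - Phi_ext (ereal t - m)) / 2" and c: "\<bar>t\<bar> < c"
  define S where "S n = (SUP \<theta>\<in>{\<theta>. \<bar>\<theta>\<bar> < c / sqrt (real n)}. err_prob mu R Fhat t n \<theta> \<epsilon>)" for n
  have window_nonempty: "{\<theta>. \<bar>\<theta>\<bar> < c / sqrt (real n)} \<noteq> {}" if "n > 0" for n
    using that c by (auto intro!: exI[of _ 0])
  have S_le_1: "eventually (\<lambda>n. S n \<le> 1) sequentially"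
    using eventually_gt_at_top[of 0]
    by eventually_elim (auto simp: S_def intro!: cSUP_least window_nonempty err_prob_le_1 R_prob)
  show "S \<longlonglongrightarrow> 1"
  proof (cases "\<epsilon> < 0")
    case True
    have "eventually (\<lambda>n. S n = 1) sequentially"
      using eventually_gt_at_top[of 0]
      by eventually_elim (simp add: S_def err_prob_negative[OF R_prob True] cSUP_const[OF window_nonempty])
    then show ?thesis by (rule tendsto_eventually)
  next
    case False
    then have "0 < m" using eps m_nonneg by (cases "m = 0") auto
    then obtain \<delta> M where \<delta>: "0 < \<delta>" "\<delta> < c - \<bar>t\<bar>" and M: "ereal M < m"
      and gap: "2 * \<epsilon> < Phi (t + M - \<delta>) - Phi (t - M + \<delta>)"
      using choose_offset_and_level[OF _ eps c] by blast
    define \<eta> where "\<eta> = (Phi (t + M - \<delta>) - Phi (t - M + \<delta>) - 2 * \<epsilon>) / 4"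
    have \<eta>: "\<eta> > 0" and gap': "2 * (\<epsilon> + \<eta>) < Phi (t + M - \<delta>) - Phi (t - M + \<delta>)"
      using gap unfolding \<eta>_def by (simp_all add: field_simps)
    have "eventually (\<lambda>n. M < sqrt (real n) * mu n) sequentially"
      using order_tendstoD(1)[OF m_lim M] by simp
    then have "eventually (\<lambda>n. \<forall>K>0. 1 - (K * err_prob mu R Fhat t n 0 \<eta> + exp ((\<bar>t\<bar> + \<delta>)\<^sup>2) / K)
                                   \<le> S n) sequentially"
      using eventually_gt_at_top[of 0] unfolding S_def
      by eventually_elim (auto intro!: sup_err_prob_lower_bound R_prob Fhat_meas mu_pos \<delta> gap')
    then show ?thesis
      by (rule tendsto_one_by_lower_bounds[OF S_le_1 consistent[OF \<eta>] exp_gt_zero])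
  qed
qed

end
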